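(* Consider the repeated long trading strategy described in the context, for fixed levels $L<D<U$ with $U-D>c$, fixed leverage $f\ge 0$, and a continuous log-price process $(X_t)$. Then the long-run return $\mu=\lim_{t\to\infty}\frac1t\ln\frac{W_t}{W_0}$ of the strategy, as a function of $f$, $D$, $U$ for the given stop-loss $L$, is $$\mu(f,D,U\mid L)=\frac{p^+\ln(1+f v^+)+p^-\ln(1+f v^-)}{p^+\,\mathbb{E}[\tau^+]+p^-\,\mathbb{E}[\tau^-]}.$$
   Context: An investor can hold a risk-free asset with zero interest rate and a risky security with price $p_t=e^{X_t}$, where $(X_t)_{t\ge0}$ is a continuous stochastic process. Transaction costs are proportional to the price, with total cost parameter $c>0$ per trade. Fix a stop-loss level $L$, an entry band $D$ and an exit band $U$ with $L<D<U$ and $U-D>c$, and a leverage $f\ge0$ (the fraction of current wealth invested in the risky security; $f>1$ means borrowing). The strategy: when $X$ reaches $D$, the investor invests the fraction $f$ of his whole wealth in the risky security (the rest in the risk-free asset); the position is closed the first time $X$ leaves the interval $(L,U)$, i.e. at $U$ (positive scenario, profit) or at $L$ (negative scenario, stop-loss). After closing, he waits until $X$ returns to $D$ and repeats. Let $\tau_e=\inf\{t:X_t\notin(L,U)\}$ with $X_0=D$, $p^+=\mathbb{P}[X_{\tau_e}=U\mid X_0=D]$, $p^-=\mathbb{P}[X_{\tau_e}=L\mid X_0=D]=1-p^+$. Let $\tau_p(U\rightsquigarrow D)=\inf\{t:X_t\le D\mid X_0=U\}$ and $\tau_p(L\rightsquigarrow D)=\inf\{t:X_t\ge D\mid X_0=L\}$.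 The trade length (time between two successive trades) is $\tau^+=\tau_e+\tau_p(U\rightsquigarrow D)$ in the positive scenario and $\tau^-=\tau_e+\tau_p(L\rightsquigarrow D)$ in the negative scenario; $\mathbb{E}[\tau^\pm]$ denote the expected trade lengths in each scenario. Set $v^+=e^{U-D-c}-1>0$ and $v^-=e^{L-D-c}-1<0$. The wealth at successive trade times satisfies $W_{t_{i+1}}=W_{t_i}(1+f v)$, with $v=v^+$ in the positive and $v=v^-$ in the negative scenario; $W_t$ denotes the wealth right after the last trade before $t$. Successive trades (outcomes and trade lengths) are independent and identically distributed. *)

theory Defs
  imports "HOL-Probability.Probability"
begin

text \<open>Net relative gains of one round trip (entry at D, exit at U resp. L, total cost c).\<close>
definition v_plus :: "real \<Rightarrow> real \<Rightarrow> real \<Rightarrow> real" where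
  "v_plus D U c = exp (U - D - c) - 1"

definition v_minus :: "real \<Rightarrow> real \<Rightarrow> real \<Rightarrow> real" where
  "v_minus L D c = exp (L - D - c) - 1"

text \<open>Trade i has outcome S i (True = positive scenario, exit at U; False = stop-loss at L)
  and length tau i. Trade times: t_0 = 0, t_(n+1) = tau 0 + ... + tau n.\<close>
definition n_trades :: "(nat \<Rightarrow> 'a \<Rightarrow> real) \<Rightarrow> real \<Rightarrow> 'a \<Rightarrow> nat" where
  "n_trades tau t \<omega> = card {n. (\<Sum>i\<le>n. tau i \<omega>) \<le> t}"

text \<open>Wealth right after the last trade before t: W_(t_(i+1)) = W_(t_i) (1 + f v).\<close>
definition wealth :: "real \<Rightarrow> real \<Rightarrow> real \<Rightarrow> real \<Rightarrow> (nat \<Rightarrow> 'a \<Rightarrow> bool)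
    \<Rightarrow> (nat \<Rightarrow> 'a \<Rightarrow> real) \<Rightarrow> real \<Rightarrow> 'a \<Rightarrow> real" where
  "wealth W0 f vp vm S tau t \<omega> =
     W0 * (\<Prod>i<n_trades tau t \<omega>. 1 + f * (if S i \<omega> then vp else vm))"

definition cond_mean :: "'a measure \<Rightarrow> ('a \<Rightarrow> real) \<Rightarrow> 'a set \<Rightarrow> real" where
  "cond_mean M Y A = (\<integral>\<omega>. indicator A \<omega> * Y \<omega> \<partial>M) / measure M A"

end

theory Submission
  imports Defs
begin

text \<open>Taking logarithms, \<open>ln (W\<^sub>t / W\<^sub>0)\<close> is the sum of the log-returns of the \<open>N\<^sub>t\<close>
  trades completed by time \<open>t\<close>. By the strong law of large numbers the average log-return
  tends to \<open>p\<^sup>+ ln (1 + f v\<^sup>+) + p\<^sup>- ln (1 + f v\<^sup>-)\<close> and the average trade length to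
  \<open>E[\<tau>] = p\<^sup>+ E[\<tau>\<^sup>+] + p\<^sup>- E[\<tau>\<^sup>-] > 0\<close>; since \<open>t\<close> lies between the completion times of
  trades \<open>N\<^sub>t\<close> and \<open>N\<^sub>t + 1\<close>, also \<open>t / N\<^sub>t \<rightarrow> E[\<tau>]\<close>, and the quotient of the two limits is
  the long-run return (the renewal-reward theorem).

  The strong law for nonnegative i.i.d. variables with finite mean is proved following Etemadi:
  truncating \<open>X\<^sub>i\<close> at \<open>i + 1\<close> changes only finitely many terms almost surely (Borel-Cantelli,
  as \<open>\<Sum>\<^sub>i P(X\<^sub>0 > i + 1) \<le> E[X\<^sub>0]\<close>); Chebyshev's inequality and Borel-Cantelli give the law
  along the subsequences \<open>\<lfloor>\<alpha>\<^sup>n\<rfloor>\<close>, \<open>\<alpha> > 1\<close>; monotonicity of the partial sums interpolates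
  between consecutive terms up to a factor \<open>\<alpha>\<close>, and \<open>\<alpha> \<rightarrow> 1\<close> finishes.\<close>

lemma cesaro_mean_tendsto_zero:
  fixes b :: "nat \<Rightarrow> real"
  assumes "b \<longlonglongrightarrow> 0"
  shows "(\<lambda>n. (\<Sum>i<n. b i) / n) \<longlonglongrightarrow> 0"
proof (rule LIMSEQ_I)
  fix r :: real assume r: "r > 0"
  from LIMSEQ_D[OF assms, of "r/2"] r obtain N where N: "\<And>i. i \<ge> N \<Longrightarrow> \<bar>b i\<bar> < r/2"
    by auto
  define C where "C = (\<Sum>i<N. \<bar>b i\<bar>)"
  obtain K :: nat where K: "real K > 2 * C / r" using reals_Archimedean2 by blast
  show "\<exists>no. \<forall>n\<ge>no. norm ((\<Sum>i<n. b i) / real n - 0) < r"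
  proof (intro exI allI impI)
    fix n assume n: "n \<ge> max (Suc N) K"
    have "(\<Sum>i<n. b i) = (\<Sum>i<N. b i) + (\<Sum>i\<in>{N..<n}. b i)"
      using n by (simp add: atLeast0LessThan[symmetric] sum.atLeastLessThan_concat)
    moreover have "\<bar>\<Sum>i<N. b i\<bar> \<le> C" unfolding C_def by (rule sum_abs)
    moreover have "\<bar>\<Sum>i\<in>{N..<n}. b i\<bar> \<le> real n * (r/2)"
    proof -
      have "\<bar>\<Sum>i\<in>{N..<n}. b i\<bar> \<le> (\<Sum>i\<in>{N..<n}. r/2)"
        by (rule order_trans[OF sum_abs]) (intro sum_mono, use N in force)
      also have "\<dots> \<le> real n * (r/2)" using r by simp
      finally show ?thesis .
    qed
    moreover have "C < real n * (r/2)"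
    proof -
      have "C * 2 < r * real K" using K r by (simp add: field_simps)
      also have "\<dots> \<le> r * real n" using n r by simp
      finally show ?thesis by (simp add: mult.commute)
    qed
    ultimately have "\<bar>\<Sum>i<n. b i\<bar> < real n * r" by linarith
    thus "norm ((\<Sum>i<n. b i) / real n - 0) < r" using n by (simp add: field_simps)
  qed
qed

lemma cesaro_mean_tendsto:
  fixes a :: "nat \<Rightarrow> real"
  assumes "a \<longlonglongrightarrow> l"
  shows "(\<lambda>n. (\<Sum>i<n. a i) / n) \<longlonglongrightarrow> l"
proof -
  have "(\<lambda>n. (\<Sum>i<n. a i - l) / n) \<longlonglongrightarrow> 0"
    by (rule cesaro_mean_tendsto_zero) (use tendsto_diff[OF assms tendsto_const[of l]] in simp)
  hence "(\<lambda>n. (\<Sum>i<n. a i - l) / n + l) \<longlonglongrightarrow> 0 + l" by (intro tendsto_add) auto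
  moreover have "\<forall>\<^sub>F n in sequentially. (\<Sum>i<n. a i - l) / n + l = (\<Sum>i<n. a i) / n"
    using eventually_gt_at_top[of 0] by eventually_elim (simp add: sum_subtractf field_simps)
  ultimately show ?thesis by (simp add: tendsto_cong)
qed

lemma average_tendsto_eventually_eq:
  fixes a b :: "nat \<Rightarrow> real"
  assumes "\<forall>\<^sub>F n in sequentially. a n = b n"
    and "(\<lambda>n. (\<Sum>i<n. b i) / n) \<longlonglongrightarrow> l"
  shows "(\<lambda>n. (\<Sum>i<n. a i) / n) \<longlonglongrightarrow> l"
proof -
  have "(\<lambda>n. a n - b n) \<longlonglongrightarrow> 0"
    using assms(1) by (intro tendsto_eventually) (auto elim: eventually_mono)
  hence "(\<lambda>n. (\<Sum>i<n. b i) / n + (\<Sum>i<n. a i - b i) / n) \<longlonglongrightarrow> l + 0"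
    by (intro tendsto_add assms(2) cesaro_mean_tendsto_zero)
  thus ?thesis by (simp add: sum_subtractf diff_divide_distrib)
qed

definition geom_index :: "real \<Rightarrow> nat \<Rightarrow> nat" where
  "geom_index \<alpha> n = nat \<lfloor>\<alpha> ^ n\<rfloor>"

lemma geom_index_ge_one: "\<alpha> \<ge> 1 \<Longrightarrow> geom_index \<alpha> n \<ge> 1"
  unfolding geom_index_def by (simp add: le_nat_floor)

lemma geom_index_le_power: "\<alpha> \<ge> 1 \<Longrightarrow> real (geom_index \<alpha> n) \<le> \<alpha> ^ n"
  unfolding geom_index_def using one_le_power[of \<alpha> n] by simp

lemma power_less_geom_index_plus_one: "\<alpha> \<ge> 1 \<Longrightarrow> \<alpha> ^ n < real (geom_index \<alpha> n) + 1"
  unfolding geom_index_def using one_le_power[of \<alpha> n] by linarith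

lemma geom_index_mono: "\<alpha> \<ge> 1 \<Longrightarrow> mono (geom_index \<alpha>)"
  unfolding geom_index_def mono_def by (intro allI impI nat_mono floor_mono power_increasing) auto

lemma filterlim_geom_index:
  assumes "\<alpha> > 1"
  shows "filterlim (geom_index \<alpha>) at_top sequentially"
  unfolding filterlim_at_top
proof
  fix Z :: nat
  obtain n where "real Z + 1 < \<alpha> ^ n" using real_arch_pow[OF assms] by blast
  hence "Z \<le> geom_index \<alpha> n" using power_less_geom_index_plus_one[of \<alpha> n] assms by simp
  thus "\<forall>\<^sub>F m in sequentially. Z \<le> geom_index \<alpha> m"
    using monoD[OF geom_index_mono] assms unfolding eventually_sequentially
    by (meson less_imp_le order.trans)
qed

lemma geom_index_Suc_ratio:
  assumes "\<alpha> > 1"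
  shows "(\<lambda>n. real (geom_index \<alpha> (Suc n)) / real (geom_index \<alpha> n)) \<longlonglongrightarrow> \<alpha>"
proof -
  define q where "q n = real (geom_index \<alpha> n) / \<alpha> ^ n" for n
  have q: "q \<longlonglongrightarrow> 1"
  proof (rule tendsto_sandwich)
    have "(\<lambda>n. 1 - (1 / \<alpha>) ^ n) \<longlonglongrightarrow> 1 - 0"
      using assms by (intro tendsto_diff tendsto_const LIMSEQ_power_zero) auto
    thus "(\<lambda>n. 1 - (1 / \<alpha>) ^ n) \<longlonglongrightarrow> 1" by simp
    show "\<forall>\<^sub>F n in sequentially. 1 - (1 / \<alpha>) ^ n \<le> q n"
    proof (intro always_eventually allI)
      fix n
      have pos: "\<alpha> ^ n > 0" using assms by simp
      have "1 - (1 / \<alpha>) ^ n = (\<alpha> ^ n - 1) / \<alpha> ^ n" using pos assms by (simp add: power_one_over diff_divide_distrib)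
      also have "\<dots> \<le> q n" unfolding q_def
        using power_less_geom_index_plus_one[of \<alpha> n] assms pos by (intro divide_right_mono) auto
      finally show "1 - (1 / \<alpha>) ^ n \<le> q n" .
    qed
    show "\<forall>\<^sub>F n in sequentially. q n \<le> 1"
      using geom_index_le_power[of \<alpha>] assms by (intro always_eventually allI) (simp add: q_def)
  qed (rule tendsto_const)
  have "(\<lambda>n. q (Suc n) * \<alpha> / q n) \<longlonglongrightarrow> 1 * \<alpha> / 1"
    by (intro tendsto_divide tendsto_mult q[THEN LIMSEQ_Suc] q tendsto_const) simp
  moreover have "q (Suc n) * \<alpha> / q n = real (geom_index \<alpha> (Suc n)) / real (geom_index \<alpha> n)" for n
    using assms geom_index_ge_one[of \<alpha> n] by (simp add: q_def field_simps)
  ultimately show ?thesis by simp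
qed

lemma eventually_ex_bracketing_index:
  fixes k :: "nat \<Rightarrow> nat"
  assumes k: "mono k" "filterlim k at_top sequentially" and P: "\<forall>\<^sub>F n in sequentially. P n"
  shows "\<forall>\<^sub>F m in sequentially. \<exists>n. P n \<and> k n \<le> m \<and> m < k (Suc n)"
proof -
  obtain N where N: "\<And>n. n \<ge> N \<Longrightarrow> P n" using P unfolding eventually_sequentially by blast
  have "\<exists>n. P n \<and> k n \<le> m \<and> m < k (Suc n)" if "k N \<le> m" for m
  proof -
    have "\<exists>p. m < k p"
      using k(2) unfolding filterlim_at_top eventually_sequentially by (metis Suc_le_eq order_refl)
    define p where "p = (LEAST p. m < k p)"
    have p: "m < k p" unfolding p_def by (rule LeastI_ex) fact
    have "N < p"
      using monoD[OF k(1), of p N] p that by (meson leI order.trans not_less)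
    then obtain n where n: "p = Suc n" "n \<ge> N" by (metis Suc_le_D less_eq_Suc_le Suc_le_mono)
    have "\<not> m < k n" using n(1) unfolding p_def by (intro not_less_Least) simp
    thus ?thesis using n p N by (intro exI[of _ n]) (auto simp: not_less)
  qed
  thus ?thesis unfolding eventually_sequentially by blast
qed

text \<open>For \<open>k n \<le> m < k (Suc n)\<close>, monotonicity traps \<open>T m / m\<close> between \<open>T (k n) / k (Suc n)\<close>
  and \<open>T (k (Suc n)) / k n\<close>, whose limits are \<open>\<mu> / \<alpha>\<close> and \<open>\<mu> \<alpha>\<close>.\<close>
lemma eventually_average_less_from_geometric_subsequence:
  fixes T :: "nat \<Rightarrow> real"
  assumes T: "mono T" "\<And>m. T m \<ge> 0" and \<alpha>: "\<alpha> > 1" and "a > \<mu> * \<alpha>"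
    and lim: "(\<lambda>n. T (geom_index \<alpha> n) / geom_index \<alpha> n) \<longlonglongrightarrow> \<mu>"
  shows "\<forall>\<^sub>F m in sequentially. T m / m < a"
proof -
  define k where "k = geom_index \<alpha>"
  have k_pos: "real (k n) > 0" for n using geom_index_ge_one[of \<alpha> n] \<alpha> by (simp add: k_def)
  have "(\<lambda>n. T (k (Suc n)) / k (Suc n) * (k (Suc n) / k n)) \<longlonglongrightarrow> \<mu> * \<alpha>"
    using lim geom_index_Suc_ratio[OF \<alpha>] unfolding k_def[symmetric] by (intro tendsto_mult LIMSEQ_Suc)
  moreover have "T (k (Suc n)) / k (Suc n) * (k (Suc n) / k n) = T (k (Suc n)) / k n" for n
    using k_pos[of "Suc n"] by simp
  ultimately have "(\<lambda>n. T (k (Suc n)) / k n) \<longlonglongrightarrow> \<mu> * \<alpha>" by (simp only:)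
  hence "\<forall>\<^sub>F n in sequentially. T (k (Suc n)) / k n < a" using \<open>a > \<mu> * \<alpha>\<close> by (rule order_tendstoD)
  hence "\<forall>\<^sub>F m in sequentially. \<exists>n. T (k (Suc n)) / k n < a \<and> k n \<le> m \<and> m < k (Suc n)"
    using geom_index_mono filterlim_geom_index \<alpha> unfolding k_def
    by (intro eventually_ex_bracketing_index) auto
  thus ?thesis
  proof (rule eventually_mono, elim exE conjE)
    fix m n assume n: "T (k (Suc n)) / k n < a" "k n \<le> m" "m < k (Suc n)"
    have m: "real m \<ge> k n" "real m > 0" using n k_pos[of n] by simp_all
    have "T m / m \<le> T (k (Suc n)) / m" using n monoD[OF T(1)] by (intro divide_right_mono) auto
    also have "\<dots> \<le> T (k (Suc n)) / k n" using m k_pos T by (intro divide_left_mono) auto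
    finally show "T m / m < a" using n by linarith
  qed
qed

lemma eventually_less_average_from_geometric_subsequence:
  fixes T :: "nat \<Rightarrow> real"
  assumes T: "mono T" "\<And>m. T m \<ge> 0" and \<alpha>: "\<alpha> > 1" and "a < \<mu> / \<alpha>"
    and lim: "(\<lambda>n. T (geom_index \<alpha> n) / geom_index \<alpha> n) \<longlonglongrightarrow> \<mu>"
  shows "\<forall>\<^sub>F m in sequentially. a < T m / m"
proof -
  define k where "k = geom_index \<alpha>"
  have k_pos: "real (k n) > 0" for n using geom_index_ge_one[of \<alpha> n] \<alpha> by (simp add: k_def)
  have "(\<lambda>n. T (k n) / k n / (k (Suc n) / k n)) \<longlonglongrightarrow> \<mu> / \<alpha>"
    using lim geom_index_Suc_ratio[OF \<alpha>] \<alpha> unfolding k_def[symmetric] by (intro tendsto_divide) auto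
  moreover have "T (k n) / k n / (k (Suc n) / k n) = T (k n) / k (Suc n)" for n
    using k_pos[of n] by simp
  ultimately have "(\<lambda>n. T (k n) / k (Suc n)) \<longlonglongrightarrow> \<mu> / \<alpha>" by (simp only:)
  hence "\<forall>\<^sub>F n in sequentially. a < T (k n) / k (Suc n)" using \<open>a < \<mu> / \<alpha>\<close> by (rule order_tendstoD)
  hence "\<forall>\<^sub>F m in sequentially. \<exists>n. a < T (k n) / k (Suc n) \<and> k n \<le> m \<and> m < k (Suc n)"
    using geom_index_mono filterlim_geom_index \<alpha> unfolding k_def
    by (intro eventually_ex_bracketing_index) auto
  thus ?thesis
  proof (rule eventually_mono, elim exE conjE)
    fix m n assume n: "a < T (k n) / k (Suc n)" "k n \<le> m" "m < k (Suc n)"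
    have m: "real m \<ge> k n" "real m > 0" using n k_pos[of n] by simp_all
    have "T (k n) / k (Suc n) \<le> T (k n) / m" using n m k_pos T by (intro divide_left_mono) auto
    also have "\<dots> \<le> T m / m" using n monoD[OF T(1)] by (intro divide_right_mono) auto
    finally show "a < T m / m" using n by linarith
  qed
qed

lemma average_tendsto_from_geometric_subsequences:
  fixes T :: "nat \<Rightarrow> real" and \<alpha> :: "nat \<Rightarrow> real"
  assumes "mono T" "\<And>m. T m \<ge> 0"
    and "\<And>j. \<alpha> j > 1" "\<alpha> \<longlonglongrightarrow> 1"
    and "\<And>j. (\<lambda>n. T (geom_index (\<alpha> j) n) / geom_index (\<alpha> j) n) \<longlonglongrightarrow> \<mu>"
  shows "(\<lambda>m. T m / m) \<longlonglongrightarrow> \<mu>"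
proof (rule order_tendstoI)
  fix a assume "a > \<mu>"
  moreover have "(\<lambda>j. \<mu> * \<alpha> j) \<longlonglongrightarrow> \<mu> * 1" by (intro tendsto_mult assms(4) tendsto_const)
  ultimately have "\<forall>\<^sub>F j in sequentially. \<mu> * \<alpha> j < a" by (simp add: order_tendstoD(2))
  then obtain j where "a > \<mu> * \<alpha> j" unfolding eventually_sequentially by blast
  thus "\<forall>\<^sub>F m in sequentially. T m / m < a"
    by (rule eventually_average_less_from_geometric_subsequence[OF assms(1,2,3) _ assms(5)])
next
  fix a assume "a < \<mu>"
  moreover have "(\<lambda>j. \<mu> / \<alpha> j) \<longlonglongrightarrow> \<mu> / 1" by (intro tendsto_divide assms(4) tendsto_const) simp
  ultimately have "\<forall>\<^sub>F j in sequentially. a < \<mu> / \<alpha> j" by (simp add: order_tendstoD(1))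
  then obtain j where "a < \<mu> / \<alpha> j" unfolding eventually_sequentially by blast
  thus "\<forall>\<^sub>F m in sequentially. a < T m / m"
    by (rule eventually_less_average_from_geometric_subsequence[OF assms(1,2,3) _ assms(5)])
qed

definition trunc_at :: "real \<Rightarrow> real \<Rightarrow> real" where
  "trunc_at c x = (if x \<le> c then x else 0)"

lemma trunc_at_measurable[measurable]: "trunc_at c \<in> borel_measurable borel"
  unfolding trunc_at_def by measurable

lemma trunc_at_bounds: "0 \<le> x \<Longrightarrow> 0 \<le> c \<Longrightarrow> 0 \<le> trunc_at c x \<and> trunc_at c x \<le> c"
  unfolding trunc_at_def by auto

lemma inverse_square_le_telescoping:
  fixes a :: real assumes "a \<ge> 1"
  shows "1 / a\<^sup>2 \<le> 2 / a - 2 / (a + 1)"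
proof -
  have "a * (a + 1) \<le> 2 * a * a" using assms by (simp add: algebra_simps)
  hence "2 / (2 * a * a) \<le> 2 / (a * (a + 1))" using assms by (intro frac_le) auto
  moreover have "2 / a - 2 / (a + 1) = 2 / (a * (a + 1))" using assms by (simp add: field_simps)
  ultimately show ?thesis using assms by (simp add: power2_eq_square)
qed

text \<open>The subtracted term \<open>1 / (K + 1)\<close> is only there to make the induction go through.\<close>
lemma sum_inverse_square_from_le:
  fixes x :: real assumes "x > 0"
  shows "(\<Sum>i<K. if x \<le> Suc i then 1 / (real (Suc i))\<^sup>2 else 0)
           \<le> 2 * max 0 (1 / max x 1 - 1 / (real K + 1))"
proof (induction K)
  case (Suc K)
  define y where "y = max x 1"
  have y: "y \<ge> 1" "y \<ge> x" unfolding y_def by auto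
  show ?case
  proof (cases "x \<le> Suc K")
    case True
    hence yK: "y \<le> real K + 1" unfolding y_def by auto
    hence "max 0 (1 / y - 1 / (real K + 1)) = 1 / y - 1 / (real K + 1)"
      using y by (simp add: frac_le)
    moreover have "1 / (real K + 2) \<le> 1 / y" using y yK by (intro divide_left_mono) auto
    moreover have "1 / (real K + 1)\<^sup>2 \<le> 2 / (real K + 1) - 2 / (real K + 1 + 1)"
      by (rule inverse_square_le_telescoping) simp
    ultimately show ?thesis using Suc.IH True unfolding y_def[symmetric]
      by (simp add: add.commute)
  next
    case False
    hence "1 / y < 1 / (real K + 1)" unfolding y_def by (intro divide_strict_left_mono) auto
    thus ?thesis using Suc.IH False unfolding y_def[symmetric] by simp
  qed
qed simp

lemma sum_trunc_at_square_le:
  fixes x :: real assumes "x \<ge> 0"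
  shows "(\<Sum>i<K. (trunc_at (Suc i) x)\<^sup>2 / (real (Suc i))\<^sup>2) \<le> 2 * x"
proof (cases "x = 0")
  case False
  hence x: "x > 0" using assms by simp
  have "(\<Sum>i<K. (trunc_at (Suc i) x)\<^sup>2 / (real (Suc i))\<^sup>2)
      = x\<^sup>2 * (\<Sum>i<K. if x \<le> Suc i then 1 / (real (Suc i))\<^sup>2 else 0)"
    unfolding sum_distrib_left trunc_at_def by (intro sum.cong refl) (auto simp: power2_eq_square)
  also have "\<dots> \<le> x\<^sup>2 * (2 * max 0 (1 / max x 1 - 1 / (real K + 1)))"
    using sum_inverse_square_from_le[OF x] by (intro mult_left_mono) auto
  also have "\<dots> \<le> x\<^sup>2 * (2 * (1 / x))"
  proof -
    have "1 / max x 1 \<le> 1 / x" using x by (intro divide_left_mono) auto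
    moreover have "0 \<le> 1 / (real K + 1)" by simp
    ultimately have "max 0 (1 / max x 1 - 1 / (real K + 1)) \<le> 1 / x"
      using x by (intro max.boundedI) (simp, linarith)
    thus ?thesis by (intro mult_left_mono) auto
  qed
  also have "\<dots> = 2 * x" using x by (simp add: power2_eq_square)
  finally show ?thesis .
qed (simp add: trunc_at_def)

lemma sum_count_Suc_less_le:
  fixes x :: real assumes "x \<ge> 0"
  shows "(\<Sum>i<n. if Suc i < x then 1 else 0 :: real) \<le> x"
proof -
  have "(\<Sum>i<n. if Suc i < x then 1 else 0 :: real) \<le> min x n"
  proof (induction n)
    case (Suc n)
    then show ?case by (cases "Suc n < x") (simp_all add: min_def split: if_splits)
  qed (use assms in simp)
  thus ?thesis by simp
qed

lemma sum_power_le_geometric_tail: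
  fixes \<beta> :: real
  assumes "finite F" "\<And>n. n \<in> F \<Longrightarrow> n0 \<le> n" "0 \<le> \<beta>" "\<beta> < 1"
  shows "(\<Sum>n\<in>F. \<beta> ^ n) \<le> \<beta> ^ n0 / (1 - \<beta>)"
proof -
  have "(\<Sum>n\<in>F. \<beta> ^ n) = \<beta> ^ n0 * (\<Sum>n\<in>F. \<beta> ^ (n - n0))"
    using assms(2) by (simp add: sum_distrib_left power_add[symmetric])
  also have "(\<Sum>n\<in>F. \<beta> ^ (n - n0)) = (\<Sum>j\<in>(\<lambda>n. n - n0) ` F. \<beta> ^ j)"
    using assms(2) by (intro sum.reindex[symmetric, unfolded comp_def] inj_onI)
      (metis le_add_diff_inverse)
  also have "\<dots> \<le> (\<Sum>j. \<beta> ^ j)"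
    by (rule sum_le_suminf) (use assms in \<open>auto intro!: summable_geometric\<close>)
  also have "\<dots> = 1 / (1 - \<beta>)" using assms by (intro suminf_geometric) auto
  finally show ?thesis using assms(3) by (simp add: mult_left_mono)
qed

lemma sum_inverse_square_geom_index_le:
  fixes \<alpha> :: real
  assumes "\<alpha> > 1"
  shows "(\<Sum>n | n < N \<and> i < geom_index \<alpha> n. 1 / (real (geom_index \<alpha> n))\<^sup>2)
           \<le> 4 / (1 - 1 / \<alpha>\<^sup>2) / (real (Suc i))\<^sup>2"
proof -
  define \<beta> where "\<beta> = 1 / \<alpha>\<^sup>2"
  define F where "F = {n. n < N \<and> i < geom_index \<alpha> n}"
  have \<beta>: "0 \<le> \<beta>" "\<beta> < 1" and \<beta>_power: "\<beta> ^ n = 1 / (\<alpha> ^ n)\<^sup>2" for n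
    using assms less_1_mult[OF assms assms] by (auto simp: \<beta>_def power_one_over power_mult_distrib[symmetric] power2_eq_square
        power_mult[symmetric] mult.commute)
  have term_le: "1 / (real (geom_index \<alpha> n))\<^sup>2 \<le> 4 * \<beta> ^ n" for n
  proof -
    have "\<alpha> ^ n \<le> 2 * real (geom_index \<alpha> n)"
      using power_less_geom_index_plus_one[of \<alpha> n] geom_index_ge_one[of \<alpha> n] assms by simp
    hence "(\<alpha> ^ n)\<^sup>2 \<le> (2 * real (geom_index \<alpha> n))\<^sup>2"
      using assms by (intro power_mono) auto
    hence "(\<alpha> ^ n)\<^sup>2 \<le> 4 * (real (geom_index \<alpha> n))\<^sup>2"
      by (simp add: power_mult_distrib)
    thus ?thesis unfolding \<beta>_power using assms geom_index_ge_one[of \<alpha> n]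
      by (simp add: field_simps)
  qed
  show ?thesis
  proof (cases "F = {}")
    case False
    define n0 where "n0 = Min F"
    have fin: "finite F" unfolding F_def by auto
    have n0: "n0 \<in> F" "\<And>n. n \<in> F \<Longrightarrow> n0 \<le> n" unfolding n0_def using fin False by auto
    have n0_bound: "\<beta> ^ n0 \<le> 1 / (real (Suc i))\<^sup>2"
    proof -
      have "real (Suc i) \<le> \<alpha> ^ n0"
        using n0(1) geom_index_le_power[of \<alpha> n0] assms unfolding F_def by simp
      thus ?thesis unfolding \<beta>_power by (intro divide_left_mono power_mono mult_pos_pos) (use assms in auto)
    qed
    have "(\<Sum>n\<in>F. 1 / (real (geom_index \<alpha> n))\<^sup>2) \<le> 4 * (\<Sum>n\<in>F. \<beta> ^ n)"
      unfolding sum_distrib_left by (intro sum_mono term_le)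
    also have "\<dots> \<le> 4 * (\<beta> ^ n0 / (1 - \<beta>))"
      using sum_power_le_geometric_tail[OF fin n0(2) \<beta>] by simp
    also have "\<dots> \<le> 4 * ((1 / (real (Suc i))\<^sup>2) / (1 - \<beta>))"
      using \<beta> n0_bound by (intro mult_left_mono divide_right_mono) auto
    finally show ?thesis unfolding F_def \<beta>_def by (simp add: mult.commute)
  qed (use \<beta> in \<open>simp add: F_def[symmetric] \<beta>_def[symmetric]\<close>)
qed

lemma sum_partial_sums_over_square_geom_index_le:
  fixes \<alpha> :: real and a :: "nat \<Rightarrow> real"
  assumes "\<alpha> > 1" "\<And>i. a i \<ge> 0"
  shows "(\<Sum>n<N. (\<Sum>i<geom_index \<alpha> n. a i) / (real (geom_index \<alpha> n))\<^sup>2)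
          \<le> 4 / (1 - 1 / \<alpha>\<^sup>2) * (\<Sum>i<geom_index \<alpha> N. a i / (real (Suc i))\<^sup>2)"
proof -
  define k where "k = geom_index \<alpha>"
  have k_le: "n < N \<Longrightarrow> k n \<le> k N" for n
    using monoD[OF geom_index_mono] assms unfolding k_def by simp
  have "(\<Sum>n<N. (\<Sum>i<k n. a i) / (real (k n))\<^sup>2)
      = (\<Sum>n<N. \<Sum>i | i \<in> {..<k N} \<and> i < k n. a i / (real (k n))\<^sup>2)"
  proof (intro sum.cong refl)
    fix n assume "n \<in> {..<N}"
    hence "{i. i \<in> {..<k N} \<and> i < k n} = {..<k n}" using k_le[of n] by auto
    thus "(\<Sum>i<k n. a i) / (real (k n))\<^sup>2 = (\<Sum>i | i \<in> {..<k N} \<and> i < k n. a i / (real (k n))\<^sup>2)"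
      by (simp add: sum_divide_distrib)
  qed
  also have "\<dots> = (\<Sum>i<k N. \<Sum>n | n \<in> {..<N} \<and> i < k n. a i / (real (k n))\<^sup>2)"
    by (rule sum.swap_restrict) auto
  also have "\<dots> = (\<Sum>i<k N. a i * (\<Sum>n | n < N \<and> i < k n. 1 / (real (k n))\<^sup>2))"
    by (simp add: sum_distrib_left)
  also have "\<dots> \<le> (\<Sum>i<k N. a i * (4 / (1 - 1 / \<alpha>\<^sup>2) / (real (Suc i))\<^sup>2))"
    using sum_inverse_square_geom_index_le[OF assms(1)] assms(2) unfolding k_def
    by (intro sum_mono mult_left_mono) auto
  also have "\<dots> = 4 / (1 - 1 / \<alpha>\<^sup>2) * (\<Sum>i<k N. a i / (real (Suc i))\<^sup>2)"
    unfolding sum_distrib_left by (intro sum.cong refl) (simp add: field_simps)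
  finally show ?thesis unfolding k_def .
qed

lemma tendsto_zero_if_eventually_less_inverse_Suc:
  fixes x :: "nat \<Rightarrow> real"
  assumes "\<And>q. \<forall>\<^sub>F n in sequentially. \<bar>x n\<bar> < 1 / Suc q"
  shows "x \<longlonglongrightarrow> 0"
proof (rule LIMSEQ_I)
  fix r :: real assume "r > 0"
  then obtain q where q: "inverse (real (Suc q)) < r" using reals_Archimedean by blast
  obtain N where "\<And>n. n \<ge> N \<Longrightarrow> \<bar>x n\<bar> < 1 / Suc q"
    using assms[of q] unfolding eventually_sequentially by blast
  thus "\<exists>N. \<forall>n\<ge>N. norm (x n - 0) < r"
    using q by (auto simp: inverse_eq_divide intro: less_trans)
qed

lemma (in prob_space) AE_eventually_not_if_summable:
  assumes "\<And>n. {\<omega> \<in> space M. P n \<omega>} \<in> events"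
    and "summable (\<lambda>n. prob {\<omega> \<in> space M. P n \<omega>})"
  shows "AE \<omega> in M. \<forall>\<^sub>F n in sequentially. \<not> P n \<omega>"
proof -
  have "AE \<omega> in M. \<forall>\<^sub>F n in sequentially. \<omega> \<in> space M - {\<omega> \<in> space M. P n \<omega>}"
    by (rule borel_cantelli_AE1[OF assms(1) _ assms(2)]) (simp add: less_top[symmetric])
  thus ?thesis by (elim AE_mp, intro AE_I2 impI) (auto elim: eventually_mono)
qed

locale iid_nonneg = prob_space +
  fixes X :: "nat \<Rightarrow> 'a \<Rightarrow> real"
  assumes indep: "indep_vars (\<lambda>_. borel) X UNIV"
    and ident: "\<And>i. distr M borel (X i) = distr M borel (X 0)"
    and nonneg: "\<And>i \<omega>. \<omega> \<in> space M \<Longrightarrow> X i \<omega> \<ge> 0"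
    and integrable_0: "integrable M (X 0)"
begin

lemma X_measurable[measurable]: "X i \<in> borel_measurable M"
  using indep unfolding indep_vars_def by auto

lemma integral_comp_identical:
  assumes "g \<in> borel_measurable borel"
  shows "(\<integral>\<omega>. g (X i \<omega>) \<partial>M) = (\<integral>\<omega>. (g (X 0 \<omega>) :: real) \<partial>M)"
  using integral_distr[OF X_measurable[of i] assms] integral_distr[OF X_measurable[of 0] assms]
    ident[of i] by simp

lemma prob_identical:
  assumes "B \<in> sets borel"
  shows "prob {\<omega> \<in> space M. X i \<omega> \<in> B} = prob {\<omega> \<in> space M. X 0 \<omega> \<in> B}"
  using measure_distr[OF X_measurable[of i] assms] measure_distr[OF X_measurable[of 0] assms]
    ident[of i] by (simp add: vimage_def Int_def conj_commute)

lemma sum_prob_Suc_less_le_expectation: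
  "(\<Sum>i<n. prob {\<omega> \<in> space M. Suc i < X 0 \<omega>}) \<le> expectation (X 0)"
proof -
  define A where "A i = {\<omega> \<in> space M. Suc i < X 0 \<omega>}" for i
  have A_integrable: "integrable M (indicator (A i) :: 'a \<Rightarrow> real)" for i
    unfolding A_def by (simp add: less_top[symmetric])
  have "(\<Sum>i<n. prob (A i)) = (\<integral>\<omega>. (\<Sum>i<n. indicator (A i) \<omega>) \<partial>M)"
    using A_integrable unfolding A_def by (simp add: Bochner_Integration.integral_sum)
  also have "\<dots> \<le> expectation (X 0)"
  proof (rule integral_mono)
    fix \<omega> assume "\<omega> \<in> space M"
    hence "(\<Sum>i<n. indicator (A i) \<omega> :: real) = (\<Sum>i<n. if Suc i < X 0 \<omega> then 1 else 0)"
      unfolding A_def by (intro sum.cong) (auto simp: indicator_def)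
    thus "(\<Sum>i<n. indicator (A i) \<omega>) \<le> X 0 \<omega>"
      using sum_count_Suc_less_le[OF nonneg[OF \<open>\<omega> \<in> space M\<close>]] by simp
  qed (use A_integrable integrable_0 in auto)
  finally show ?thesis unfolding A_def .
qed

definition truncated :: "nat \<Rightarrow> 'a \<Rightarrow> real" where
  "truncated i \<omega> = trunc_at (Suc i) (X i \<omega>)"

lemma truncated_measurable[measurable]: "truncated i \<in> borel_measurable M"
  unfolding truncated_def by measurable

lemma truncated_bounds: "\<omega> \<in> space M \<Longrightarrow> 0 \<le> truncated i \<omega> \<and> truncated i \<omega> \<le> Suc i"
  unfolding truncated_def using nonneg by (intro trunc_at_bounds) auto

lemma integrable_truncated[simp]: "integrable M (truncated i)"
  using truncated_bounds by (intro integrable_const_bound[where B="Suc i"] AE_I2) auto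

lemma integrable_truncated_mult[simp]: "integrable M (\<lambda>\<omega>. truncated i \<omega> * truncated j \<omega>)"
proof (intro integrable_const_bound[where B="real (Suc i) * real (Suc j)"] AE_I2)
  fix \<omega> assume "\<omega> \<in> space M"
  hence "0 \<le> truncated i \<omega>" "truncated i \<omega> \<le> Suc i" "0 \<le> truncated j \<omega>" "truncated j \<omega> \<le> Suc j"
    using truncated_bounds by auto
  thus "norm (truncated i \<omega> * truncated j \<omega>) \<le> real (Suc i) * real (Suc j)"
    by (simp add: abs_mult mult_mono del: of_nat_Suc)
qed simp

lemma AE_eventually_X_eq_truncated: "AE \<omega> in M. \<forall>\<^sub>F n in sequentially. X n \<omega> = truncated n \<omega>"
proof -
  have "prob {\<omega> \<in> space M. Suc i < X i \<omega>} = prob {\<omega> \<in> space M. Suc i < X 0 \<omega>}" for i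
    using prob_identical[of "{real (Suc i)<..}" i] by simp
  hence "summable (\<lambda>i. prob {\<omega> \<in> space M. Suc i < X i \<omega>})"
    using sum_prob_Suc_less_le_expectation by (intro summableI_nonneg_bounded) simp_all
  hence "AE \<omega> in M. \<forall>\<^sub>F n in sequentially. \<not> Suc n < X n \<omega>"
    by (intro AE_eventually_not_if_summable) measurable
  thus ?thesis by (rule eventually_mono) (auto simp: truncated_def trunc_at_def elim: eventually_mono)
qed

lemma expectation_truncated_tendsto: "(\<lambda>i. expectation (truncated i)) \<longlonglongrightarrow> expectation (X 0)"
proof -
  have "(\<lambda>i. \<integral>\<omega>. trunc_at (Suc i) (X 0 \<omega>) \<partial>M) \<longlonglongrightarrow> expectation (X 0)"
  proof (rule integral_dominated_convergence[where w="X 0"])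
    show "AE \<omega> in M. (\<lambda>i. trunc_at (Suc i) (X 0 \<omega>)) \<longlonglongrightarrow> X 0 \<omega>"
    proof (intro AE_I2 tendsto_eventually)
      fix \<omega>
      obtain n :: nat where "X 0 \<omega> \<le> n" using real_arch_simple by blast
      thus "\<forall>\<^sub>F i in sequentially. trunc_at (Suc i) (X 0 \<omega>) = X 0 \<omega>"
        unfolding eventually_sequentially trunc_at_def by (intro exI[of _ n]) auto
    qed
    show "AE \<omega> in M. norm (trunc_at (Suc i) (X 0 \<omega>)) \<le> X 0 \<omega>" for i
      using nonneg by (intro AE_I2) (auto simp: trunc_at_def)
  qed (simp_all add: integrable_0)
  moreover have "expectation (truncated i) = (\<integral>\<omega>. trunc_at (Suc i) (X 0 \<omega>) \<partial>M)" for i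
    unfolding truncated_def by (rule integral_comp_identical) simp
  ultimately show ?thesis by simp
qed

lemma sum_expectation_truncated_square_le:
  "(\<Sum>i<K. expectation (\<lambda>\<omega>. (truncated i \<omega>)\<^sup>2) / (real (Suc i))\<^sup>2) \<le> 2 * expectation (X 0)"
proof -
  have integrable_i: "integrable M (\<lambda>\<omega>. (trunc_at (Suc i) (X 0 \<omega>))\<^sup>2)" for i
    using nonneg trunc_at_bounds[of "X 0 _" "Suc i"]
    by (intro integrable_const_bound[where B="(Suc i)\<^sup>2"] AE_I2) (auto intro!: power_mono)
  have "expectation (\<lambda>\<omega>. (truncated i \<omega>)\<^sup>2) = (\<integral>\<omega>. (trunc_at (Suc i) (X 0 \<omega>))\<^sup>2 \<partial>M)" for i
    unfolding truncated_def by (rule integral_comp_identical[where g="\<lambda>x. (trunc_at (Suc i) x)\<^sup>2"]) simp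
  hence "(\<Sum>i<K. expectation (\<lambda>\<omega>. (truncated i \<omega>)\<^sup>2) / (real (Suc i))\<^sup>2)
      = (\<integral>\<omega>. (\<Sum>i<K. (trunc_at (Suc i) (X 0 \<omega>))\<^sup>2 / (real (Suc i))\<^sup>2) \<partial>M)"
    using integrable_i by (simp add: Bochner_Integration.integral_sum)
  also have "\<dots> \<le> (\<integral>\<omega>. 2 * X 0 \<omega> \<partial>M)"
    using integrable_i integrable_0 sum_trunc_at_square_le[OF nonneg]
    by (intro integral_mono) auto
  finally show ?thesis by simp
qed

definition centered :: "nat \<Rightarrow> 'a \<Rightarrow> real" where
  "centered i \<omega> = truncated i \<omega> - expectation (truncated i)"

lemma centered_measurable[measurable]: "centered i \<in> borel_measurable M"
  unfolding centered_def by measurable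

lemma integrable_centered[simp]: "integrable M (centered i)"
  unfolding centered_def by simp

lemma integrable_centered_mult[simp]: "integrable M (\<lambda>\<omega>. centered i \<omega> * centered j \<omega>)"
  unfolding centered_def by (simp add: algebra_simps del: integrable_mult_left_iff)

lemma integral_centered_mult:
  "(\<integral>\<omega>. centered i \<omega> * centered j \<omega> \<partial>M) =
     (if i = j then variance (truncated i) else 0)"
proof (cases "i = j")
  case False
  have "indep_vars (\<lambda>_. borel) (\<lambda>i \<omega>. trunc_at (Suc i) (X i \<omega>) - expectation (truncated i)) UNIV"
    by (rule indep_vars_compose2[OF indep]) measurable
  hence "indep_vars (\<lambda>_. borel) centered UNIV" unfolding centered_def truncated_def .
  hence "indep_vars (\<lambda>_. borel) centered {i, j}" by (rule indep_vars_subset) auto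
  hence "(\<integral>\<omega>. (\<Prod>l\<in>{i, j}. centered l \<omega>) \<partial>M) = (\<Prod>l\<in>{i, j}. \<integral>\<omega>. centered l \<omega> \<partial>M)"
    by (intro indep_vars_lebesgue_integral) auto
  thus ?thesis using False by (simp add: centered_def prob_space)
qed (simp add: centered_def power2_eq_square)

lemma integral_sum_centered_square:
  "(\<integral>\<omega>. (\<Sum>i<K. centered i \<omega>)\<^sup>2 \<partial>M) = (\<Sum>i<K. variance (truncated i))"
proof -
  have "(\<integral>\<omega>. (\<Sum>i<K. centered i \<omega>)\<^sup>2 \<partial>M) = (\<integral>\<omega>. (\<Sum>i<K. \<Sum>j<K. centered i \<omega> * centered j \<omega>) \<partial>M)"
    by (simp add: power2_eq_square sum_product)
  also have "\<dots> = (\<Sum>i<K. \<Sum>j<K. \<integral>\<omega>. centered i \<omega> * centered j \<omega> \<partial>M)"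
    by (simp add: Bochner_Integration.integral_sum)
  finally show ?thesis by (simp add: integral_centered_mult)
qed

lemma prob_sum_centered_deviation_le:
  assumes "\<epsilon> > 0" "K > 0"
  shows "prob {\<omega> \<in> space M. \<epsilon> * K \<le> \<bar>\<Sum>i<K. centered i \<omega>\<bar>}
           \<le> (\<Sum>i<K. expectation (\<lambda>\<omega>. (truncated i \<omega>)\<^sup>2)) / (\<epsilon> * K)\<^sup>2"
proof -
  have "integrable M (\<lambda>\<omega>. (\<Sum>i<K. centered i \<omega>)\<^sup>2)"
    by (simp add: power2_eq_square sum_product del: integrable_centered_mult)
      (intro Bochner_Integration.integrable_sum integrable_centered_mult)
  hence "prob {\<omega> \<in> space M. \<epsilon> * K \<le> \<bar>\<Sum>i<K. centered i \<omega>\<bar>}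
        \<le> (\<Sum>i<K. variance (truncated i)) / (\<epsilon> * K)\<^sup>2"
    using second_moment_method[of "\<lambda>\<omega>. \<Sum>i<K. centered i \<omega>" "\<epsilon> * K"] assms
    by (simp add: integral_sum_centered_square)
  also have "\<dots> \<le> (\<Sum>i<K. expectation (\<lambda>\<omega>. (truncated i \<omega>)\<^sup>2)) / (\<epsilon> * K)\<^sup>2"
  proof (intro divide_right_mono sum_mono)
    fix i
    have "variance (truncated i) = expectation (\<lambda>\<omega>. (truncated i \<omega>)\<^sup>2) - (expectation (truncated i))\<^sup>2"
      by (rule variance_eq) (simp_all add: power2_eq_square)
    thus "variance (truncated i) \<le> expectation (\<lambda>\<omega>. (truncated i \<omega>)\<^sup>2)" by simp
  qed simp
  finally show ?thesis .
qed

lemma summable_prob_centered_deviation: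
  fixes \<epsilon> :: real
  assumes "\<alpha> > 1" "\<epsilon> > 0"
  shows "summable (\<lambda>n. prob {\<omega> \<in> space M.
           \<epsilon> * geom_index \<alpha> n \<le> \<bar>\<Sum>i<geom_index \<alpha> n. centered i \<omega>\<bar>})"
proof (rule summableI_nonneg_bounded)
  fix N
  define k where "k = geom_index \<alpha>"
  define a where "a i = expectation (\<lambda>\<omega>. (truncated i \<omega>)\<^sup>2)" for i
  have a: "a i \<ge> 0" for i unfolding a_def by simp
  have C: "0 \<le> 4 / (1 - 1 / \<alpha>\<^sup>2)" using assms less_1_mult[of \<alpha> \<alpha>] by (simp add: power2_eq_square)
  have "(\<Sum>n<N. prob {\<omega> \<in> space M. \<epsilon> * k n \<le> \<bar>\<Sum>i<k n. centered i \<omega>\<bar>})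
      \<le> (\<Sum>n<N. 1 / \<epsilon>\<^sup>2 * ((\<Sum>i<k n. a i) / (real (k n))\<^sup>2))"
    using prob_sum_centered_deviation_le[OF assms(2)] geom_index_ge_one[of \<alpha>] assms
    by (intro sum_mono) (simp add: a_def k_def power_mult_distrib Suc_le_eq)
  also have "\<dots> \<le> 1 / \<epsilon>\<^sup>2 * (4 / (1 - 1 / \<alpha>\<^sup>2) * (\<Sum>i<k N. a i / (real (Suc i))\<^sup>2))"
    unfolding sum_distrib_left[symmetric] k_def
    by (intro mult_left_mono sum_partial_sums_over_square_geom_index_le assms(1) a) simp
  also have "\<dots> \<le> 1 / \<epsilon>\<^sup>2 * (4 / (1 - 1 / \<alpha>\<^sup>2) * (2 * expectation (X 0)))"
    using sum_expectation_truncated_square_le C unfolding a_def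
    by (intro mult_left_mono) auto
  finally show "(\<Sum>n<N. prob {\<omega> \<in> space M. \<epsilon> * geom_index \<alpha> n \<le> \<bar>\<Sum>i<geom_index \<alpha> n. centered i \<omega>\<bar>})
      \<le> 1 / \<epsilon>\<^sup>2 * (4 / (1 - 1 / \<alpha>\<^sup>2) * (2 * expectation (X 0)))"
    unfolding k_def .
qed simp

lemma AE_centered_average_geom_index_tendsto_zero:
  assumes "\<alpha> > 1"
  shows "AE \<omega> in M. (\<lambda>n. (\<Sum>i<geom_index \<alpha> n. centered i \<omega>) / geom_index \<alpha> n) \<longlonglongrightarrow> 0"
proof -
  have "AE \<omega> in M. \<forall>q. \<forall>\<^sub>F n in sequentially.
          \<not> 1 / Suc q * geom_index \<alpha> n \<le> \<bar>\<Sum>i<geom_index \<alpha> n. centered i \<omega>\<bar>"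
    unfolding AE_all_countable
    by (intro allI AE_eventually_not_if_summable summable_prob_centered_deviation assms) auto
  thus ?thesis
  proof (elim AE_mp, intro AE_I2 impI tendsto_zero_if_eventually_less_inverse_Suc)
    fix \<omega> q
    assume "\<forall>q. \<forall>\<^sub>F n in sequentially.
              \<not> 1 / Suc q * geom_index \<alpha> n \<le> \<bar>\<Sum>i<geom_index \<alpha> n. centered i \<omega>\<bar>"
    hence "\<forall>\<^sub>F n in sequentially.
             \<not> 1 / Suc q * geom_index \<alpha> n \<le> \<bar>\<Sum>i<geom_index \<alpha> n. centered i \<omega>\<bar>" ..
    thus "\<forall>\<^sub>F n in sequentially. \<bar>(\<Sum>i<geom_index \<alpha> n. centered i \<omega>) / geom_index \<alpha> n\<bar> < 1 / Suc q"
    proof (rule eventually_mono)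
      fix n
      have "real (geom_index \<alpha> n) > 0" using geom_index_ge_one[of \<alpha> n] assms by simp
      thus "\<not> 1 / Suc q * geom_index \<alpha> n \<le> \<bar>\<Sum>i<geom_index \<alpha> n. centered i \<omega>\<bar> \<Longrightarrow>
          \<bar>(\<Sum>i<geom_index \<alpha> n. centered i \<omega>) / geom_index \<alpha> n\<bar> < 1 / Suc q"
        by (simp add: divide_less_eq mult.commute)
    qed
  qed
qed

theorem strong_law_of_large_numbers:
  "AE \<omega> in M. (\<lambda>n. (\<Sum>i<n. X i \<omega>) / n) \<longlonglongrightarrow> expectation (X 0)"
proof -
  \<comment> \<open>Countably many ratios \<open>\<alpha> j \<rightarrow> 1\<close>, so that the almost-sure statements can be combined.\<close>
  define \<alpha> where "\<alpha> j = 1 + 1 / Suc j" for j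
  have "(\<lambda>j. 1 + 1 / real (Suc j)) \<longlonglongrightarrow> 1 + 0"
    by (intro tendsto_add tendsto_const LIMSEQ_Suc[OF lim_const_over_n])
  hence \<alpha>: "\<And>j. \<alpha> j > 1" "\<alpha> \<longlonglongrightarrow> 1" unfolding \<alpha>_def by auto
  have "AE \<omega> in M. \<forall>j. (\<lambda>n. (\<Sum>i<geom_index (\<alpha> j) n. centered i \<omega>) / geom_index (\<alpha> j) n) \<longlonglongrightarrow> 0"
    unfolding AE_all_countable using AE_centered_average_geom_index_tendsto_zero \<alpha>(1) by blast
  then show ?thesis using AE_eventually_X_eq_truncated AE_space
  proof eventually_elim
    case (elim \<omega>)
    have mean: "(\<lambda>n. (\<Sum>i<n. expectation (truncated i)) / n) \<longlonglongrightarrow> expectation (X 0)"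
      by (rule cesaro_mean_tendsto[OF expectation_truncated_tendsto])
    have "(\<lambda>n. (\<Sum>i<n. truncated i \<omega>) / n) \<longlonglongrightarrow> expectation (X 0)"
    proof (rule average_tendsto_from_geometric_subsequences[OF _ _ \<alpha>])
      show "mono (\<lambda>n. \<Sum>i<n. truncated i \<omega>)"
        using truncated_bounds elim(3) by (intro monoI sum_mono2) auto
      show "0 \<le> (\<Sum>i<n. truncated i \<omega>)" for n
        using truncated_bounds elim(3) by (intro sum_nonneg) auto
      fix j
      have "(\<lambda>n. (\<Sum>i<geom_index (\<alpha> j) n. centered i \<omega>) / geom_index (\<alpha> j) n
              + (\<Sum>i<geom_index (\<alpha> j) n. expectation (truncated i)) / geom_index (\<alpha> j) n)
            \<longlonglongrightarrow> 0 + expectation (X 0)"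
        using elim(1) filterlim_compose[OF mean filterlim_geom_index[OF \<alpha>(1)]]
        by (intro tendsto_add) auto
      thus "(\<lambda>n. (\<Sum>i<geom_index (\<alpha> j) n. truncated i \<omega>) / geom_index (\<alpha> j) n)
              \<longlonglongrightarrow> expectation (X 0)"
        by (simp add: centered_def sum_subtractf diff_divide_distrib)
    qed
    thus ?case by (rule average_tendsto_eventually_eq[OF elim(2)])
  qed
qed

end

lemma filterlim_at_top_if_average_tendsto_pos:
  fixes s :: "nat \<Rightarrow> real"
  assumes "(\<lambda>n. s n / n) \<longlonglongrightarrow> \<nu>" "\<nu> > 0"
  shows "filterlim s at_top sequentially"
proof -
  have "\<forall>\<^sub>F n in sequentially. s n / n * n = s n"
    using eventually_gt_at_top[of 0] by eventually_elim simp
  from filterlim_cong[OF refl refl this]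
  show ?thesis using filterlim_tendsto_pos_mult_at_top[OF assms filterlim_real_sequentially] by simp
qed

lemma le_n_trades_iff:
  assumes nonneg: "\<And>i. tau i \<omega> \<ge> 0"
    and unbounded: "filterlim (\<lambda>n. \<Sum>i<n. tau i \<omega>) at_top sequentially"
    and "t \<ge> 0"
  shows "K \<le> n_trades tau t \<omega> \<longleftrightarrow> (\<Sum>i<K. tau i \<omega>) \<le> t"
proof -
  define S where "S n = (\<Sum>i<n. tau i \<omega>)" for n
  define A where "A = {n. S (Suc n) \<le> t}"
  have S_mono: "mono S" unfolding S_def using nonneg by (intro monoI sum_mono2) auto
  have below: "Suc n < m" if "n \<in> A" "t < S m" for n m
  proof (rule ccontr)
    assume "\<not> Suc n < m"
    hence "S m \<le> S (Suc n)" using monoD[OF S_mono] by simp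
    thus False using that unfolding A_def by simp
  qed
  obtain K0 where "t < S K0"
    using filterlim_at_top_dense[THEN iffD1, OF unbounded[folded S_def], rule_format, of t]
    unfolding eventually_sequentially by blast
  hence "A \<subseteq> {..<K0}" using below by fastforce
  hence fin: "finite A" by (rule finite_subset) simp
  have "n_trades tau t \<omega> = card A"
    unfolding n_trades_def A_def S_def by (simp add: lessThan_Suc_atMost)
  moreover have "K \<le> card A \<longleftrightarrow> S K \<le> t"
  proof
    assume "S K \<le> t"
    have "{..<K} \<subseteq> A"
    proof
      fix n assume "n \<in> {..<K}"
      hence "S (Suc n) \<le> S K" using monoD[OF S_mono] by simp
      thus "n \<in> A" using \<open>S K \<le> t\<close> unfolding A_def by simp
    qed
    thus "K \<le> card A" using card_mono[OF fin] by (metis card_lessThan)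
  next
    assume "K \<le> card A"
    show "S K \<le> t"
    proof (rule ccontr)
      assume "\<not> S K \<le> t"
      have "A \<subseteq> {..<K - 1}"
      proof
        fix n assume "n \<in> A"
        hence "Suc n < K" using below \<open>\<not> S K \<le> t\<close> by simp
        thus "n \<in> {..<K - 1}" by simp
      qed
      moreover have "K \<noteq> 0" using \<open>\<not> S K \<le> t\<close> \<open>t \<ge> 0\<close> S_def by (metis lessThan_0 sum.empty)
      ultimately show False using \<open>K \<le> card A\<close> card_mono[of "{..<K - 1}" A] by auto
    qed
  qed
  ultimately show ?thesis unfolding S_def by simp
qed

lemma n_trades_bracket:
  assumes "\<And>i. tau i \<omega> \<ge> 0" "filterlim (\<lambda>n. \<Sum>i<n. tau i \<omega>) at_top sequentially" "t \<ge> 0"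
  shows "(\<Sum>i<n_trades tau t \<omega>. tau i \<omega>) \<le> t" "t < (\<Sum>i<Suc (n_trades tau t \<omega>). tau i \<omega>)"
  using le_n_trades_iff[where tau=tau and \<omega>=\<omega> and t=t, OF assms, of "n_trades tau t \<omega>"]
    le_n_trades_iff[where tau=tau and \<omega>=\<omega> and t=t, OF assms, of "Suc (n_trades tau t \<omega>)"]
  by (simp_all del: sum.lessThan_Suc)

lemma filterlim_n_trades_at_top:
  assumes "\<And>i. tau i \<omega> \<ge> 0" "filterlim (\<lambda>n. \<Sum>i<n. tau i \<omega>) at_top sequentially"
  shows "filterlim (\<lambda>t. n_trades tau t \<omega>) at_top at_top"
  unfolding filterlim_at_top
proof
  fix K
  show "\<forall>\<^sub>F t in at_top. K \<le> n_trades tau t \<omega>"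
    using eventually_ge_at_top[of "max 0 (\<Sum>i<K. tau i \<omega>)"]
    by eventually_elim (simp add: le_n_trades_iff[where tau=tau and \<omega>=\<omega>, OF assms])
qed

lemma renewal_reward_tendsto:
  fixes r :: "nat \<Rightarrow> real"
  assumes nonneg: "\<And>i. tau i \<omega> \<ge> 0"
    and cycles: "(\<lambda>n. (\<Sum>i<n. tau i \<omega>) / n) \<longlonglongrightarrow> \<nu>" "\<nu> > 0"
    and rewards: "(\<lambda>n. (\<Sum>i<n. r i) / n) \<longlonglongrightarrow> \<rho>"
  shows "((\<lambda>t. (\<Sum>i<n_trades tau t \<omega>. r i) / t) \<longlongrightarrow> \<rho> / \<nu>) at_top"
proof -
  define N where "N t = n_trades tau t \<omega>" for t
  define S where "S n = (\<Sum>i<n. tau i \<omega>)" for n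
  have unbounded: "filterlim S at_top sequentially"
    unfolding S_def by (rule filterlim_at_top_if_average_tendsto_pos[OF cycles])
  have N: "filterlim N at_top at_top"
    unfolding N_def S_def by (rule filterlim_n_trades_at_top[where tau=tau, OF nonneg unbounded[unfolded S_def]])
  have bracket: "S (N t) \<le> t" "t < S (Suc (N t))" if "t \<ge> 0" for t
    using n_trades_bracket[where tau=tau, OF nonneg unbounded[unfolded S_def] that]
    unfolding S_def N_def by auto
  have pos: "\<forall>\<^sub>F t in at_top. N t > 0 \<and> t > 0"
    using filterlim_at_top[THEN iffD1, OF N, rule_format, of 1] eventually_gt_at_top[of 0]
    by eventually_elim auto
  have upper: "(\<lambda>n. S (Suc n) / n) \<longlonglongrightarrow> \<nu>"
  proof -
    have "(\<lambda>n. S (Suc n) / Suc n * (Suc n / n)) \<longlonglongrightarrow> \<nu> * 1"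
      using cycles(1)[folded S_def, THEN LIMSEQ_Suc] LIMSEQ_Suc_n_over_n
      by (intro tendsto_mult) auto
    moreover have "\<forall>\<^sub>F n in sequentially. S (Suc n) / Suc n * (Suc n / n) = S (Suc n) / n"
      using eventually_gt_at_top[of 0] by eventually_elim simp
    ultimately show ?thesis by (simp add: tendsto_cong)
  qed
  have "((\<lambda>t. t / N t) \<longlongrightarrow> \<nu>) at_top"
  proof (rule tendsto_sandwich)
    show "\<forall>\<^sub>F t in at_top. S (N t) / N t \<le> t / N t"
      using pos by eventually_elim (use bracket(1) in \<open>auto intro!: divide_right_mono\<close>)
    show "\<forall>\<^sub>F t in at_top. t / N t \<le> S (Suc (N t)) / N t"
      using pos
    proof eventually_elim
      case (elim t)
      thus ?case using bracket(2)[of t] by (intro divide_right_mono) auto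
    qed
  qed (use filterlim_compose[OF cycles(1)[folded S_def] N] filterlim_compose[OF upper N] in auto)
  hence "((\<lambda>t. ((\<Sum>i<N t. r i) / N t) / (t / N t)) \<longlongrightarrow> \<rho> / \<nu>) at_top"
    using filterlim_compose[OF rewards N] cycles(2) by (intro tendsto_divide) auto
  moreover have "\<forall>\<^sub>F t in at_top. ((\<Sum>i<N t. r i) / N t) / (t / N t) = (\<Sum>i<N t. r i) / t"
    using pos by eventually_elim auto
  ultimately show ?thesis unfolding N_def by (rule Lim_transform_eventually)
qed

lemma average_if_tendsto:
  fixes a b :: real
  assumes "(\<lambda>n. (\<Sum>i<n. of_bool (P i)) / n) \<longlonglongrightarrow> p"
  shows "(\<lambda>n. (\<Sum>i<n. if P i then a else b) / n) \<longlonglongrightarrow> p * a + (1 - p) * b"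
proof -
  have "(\<lambda>n. b + (a - b) * ((\<Sum>i<n. of_bool (P i)) / n)) \<longlonglongrightarrow> b + (a - b) * p"
    by (intro tendsto_intros assms)
  moreover have "\<forall>\<^sub>F n in sequentially. b + (a - b) * ((\<Sum>i<n. of_bool (P i)) / n) = (\<Sum>i<n. if P i then a else b) / n"
  proof (rule eventually_mono[OF eventually_gt_at_top[of 0]])
    fix n :: nat assume "n > 0"
    have "(\<Sum>i<n. if P i then a else b) = (\<Sum>i<n. b) + (\<Sum>i<n. (a - b) * of_bool (P i))"
      unfolding sum.distrib[symmetric] by (intro sum.cong) auto
    also have "\<dots> = n * b + (a - b) * (\<Sum>i<n. of_bool (P i))"
      by (simp only: sum_constant card_lessThan sum_distrib_left)
    finally show "b + (a - b) * ((\<Sum>i<n. of_bool (P i)) / n) = (\<Sum>i<n. if P i then a else b) / n"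
      using \<open>n > 0\<close> by (simp add: field_simps)
  qed
  ultimately show ?thesis by (simp add: tendsto_cong algebra_simps)
qed

lemma ln_wealth_div:
  assumes "W0 > 0" "1 + f * vp > 0" "1 + f * vm > 0"
  shows "ln (wealth W0 f vp vm S tau t \<omega> / W0)
           = (\<Sum>i<n_trades tau t \<omega>. if S i \<omega> then ln (1 + f * vp) else ln (1 + f * vm))"
  using assms by (simp add: wealth_def ln_prod if_distrib)

lemma (in prob_space) measure_mult_cond_mean:
  assumes "B \<in> events"
  shows "prob B * cond_mean M Y B = (\<integral>\<omega>. indicator B \<omega> * Y \<omega> \<partial>M)"
proof (cases "prob B = 0")
  case True
  hence "AE \<omega> in M. \<omega> \<notin> B" using assms by (intro AE_not_in null_setsI) (simp_all add: emeasure_eq_measure)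
  hence "(\<integral>\<omega>. indicator B \<omega> * Y \<omega> \<partial>M) = 0"
    by (intro integral_eq_zero_AE) (auto elim: eventually_mono)
  thus ?thesis using True by simp
qed (simp add: cond_mean_def)

lemma (in prob_space) expectation_eq_cond_mean_split:
  assumes "integrable M Y" "B \<in> events"
  shows "expectation Y = prob B * cond_mean M Y B + prob (space M - B) * cond_mean M Y (space M - B)"
proof -
  have "expectation Y = (\<integral>\<omega>. indicator B \<omega> * Y \<omega> + indicator (space M - B) \<omega> * Y \<omega> \<partial>M)"
    using sets.sets_into_space[OF assms(2)] by (intro Bochner_Integration.integral_cong) (auto simp: indicator_def)
  also have "\<dots> = (\<integral>\<omega>. indicator B \<omega> * Y \<omega> \<partial>M) + (\<integral>\<omega>. indicator (space M - B) \<omega> * Y \<omega> \<partial>M)"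
    using integrable_real_mult_indicator[OF _ assms(1)] assms(2)
    by (intro Bochner_Integration.integral_add) (simp_all add: mult.commute)
  finally show ?thesis using assms by (simp add: measure_mult_cond_mean)
qed

lemma (in prob_space) expectation_of_bool:
  assumes "{\<omega> \<in> space M. P \<omega>} \<in> events"
  shows "expectation (\<lambda>\<omega>. of_bool (P \<omega>)) = prob {\<omega> \<in> space M. P \<omega>}"
proof -
  have "expectation (\<lambda>\<omega>. of_bool (P \<omega>)) = expectation (indicator {\<omega> \<in> space M. P \<omega>} :: 'a \<Rightarrow> real)"
    by (intro Bochner_Integration.integral_cong) (auto simp: indicator_def)
  thus ?thesis using assms by simp
qed

lemma (in prob_space) iid_nonneg_comp:
  assumes indep: "indep_vars (\<lambda>_. N) Z UNIV" and ident: "\<And>i. distr M N (Z i) = distr M N (Z 0)"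
    and g: "g \<in> borel_measurable N"
    and "\<And>i \<omega>. \<omega> \<in> space M \<Longrightarrow> g (Z i \<omega>) \<ge> 0" "integrable M (\<lambda>\<omega>. g (Z 0 \<omega>))"
  shows "iid_nonneg M (\<lambda>i \<omega>. g (Z i \<omega>))"
proof unfold_locales
  show "indep_vars (\<lambda>_. borel) (\<lambda>i \<omega>. g (Z i \<omega>)) UNIV"
    using indep_vars_compose2[OF indep, of "\<lambda>_. g"] g by simp
  have Z: "Z i \<in> measurable M N" for i using indep unfolding indep_vars_def by auto
  show "distr M borel (\<lambda>\<omega>. g (Z i \<omega>)) = distr M borel (\<lambda>\<omega>. g (Z 0 \<omega>))" for i
    using distr_distr[OF g Z[of i]] distr_distr[OF g Z[of 0]] ident[of i] by (simp add: comp_def)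
qed (use assms in auto)

theorem proposition1:
  fixes M :: "'a measure"
    and S :: "nat \<Rightarrow> 'a \<Rightarrow> bool"
    and tau :: "nat \<Rightarrow> 'a \<Rightarrow> real"
    and L D U c f W0 :: real
  assumes "prob_space M"
    and "L < D" "D < U" "U - D > c" "c > 0" "f \<ge> 0"
    and "1 + f * v_minus L D c > 0"
    and "W0 > 0"
    and indep: "prob_space.indep_vars M (\<lambda>_. count_space UNIV \<Otimes>\<^sub>M borel)
                  (\<lambda>i \<omega>. (S i \<omega>, tau i \<omega>)) UNIV"
    and ident: "\<And>i. distr M (count_space UNIV \<Otimes>\<^sub>M borel) (\<lambda>\<omega>. (S i \<omega>, tau i \<omega>))
                    = distr M (count_space UNIV \<Otimes>\<^sub>M borel) (\<lambda>\<omega>. (S 0 \<omega>, tau 0 \<omega>))"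
    and pos: "\<And>i \<omega>. \<omega> \<in> space M \<Longrightarrow> tau i \<omega> > 0"
    and int: "integrable M (tau 0)"
  defines "p_plus \<equiv> measure M {\<omega> \<in> space M. S 0 \<omega>}"
    and "p_minus \<equiv> measure M {\<omega> \<in> space M. \<not> S 0 \<omega>}"
    and "E_plus \<equiv> cond_mean M (tau 0) {\<omega> \<in> space M. S 0 \<omega>}"
    and "E_minus \<equiv> cond_mean M (tau 0) {\<omega> \<in> space M. \<not> S 0 \<omega>}"
  shows "AE \<omega> in M.
     ((\<lambda>t. ln (wealth W0 f (v_plus D U c) (v_minus L D c) S tau t \<omega> / W0) / t)
        \<longlongrightarrow> (p_plus * ln (1 + f * v_plus D U c) + p_minus * ln (1 + f * v_minus L D c))
             / (p_plus * E_plus + p_minus * E_minus)) at_top"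
proof -
  interpret prob_space M by fact
  define A where "A = {\<omega> \<in> space M. S 0 \<omega>}"
  have "(\<lambda>\<omega>. (S 0 \<omega>, tau 0 \<omega>)) \<in> measurable M (count_space UNIV \<Otimes>\<^sub>M borel)"
    using indep unfolding indep_vars_def by auto
  hence [measurable]: "S 0 \<in> measurable M (count_space UNIV)"
    using measurable_compose[OF _ measurable_fst] by fastforce
  have A: "A \<in> events" "space M - A = {\<omega> \<in> space M. \<not> S 0 \<omega>}"
    unfolding A_def by auto
  have "iid_nonneg M (\<lambda>i \<omega>. snd (S i \<omega>, tau i \<omega>))"
    using pos int by (intro iid_nonneg_comp[OF indep ident]) (auto intro: less_imp_le)
  then interpret cycles: iid_nonneg M tau by simp
  have "iid_nonneg M (\<lambda>i \<omega>. of_bool (fst (S i \<omega>, tau i \<omega>)) :: real)"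
    by (intro iid_nonneg_comp[OF indep ident] integrable_const_bound[where B=1]) auto
  then interpret wins: iid_nonneg M "\<lambda>i \<omega>. of_bool (S i \<omega>)" by simp
  have p_minus: "p_minus = 1 - p_plus"
    using prob_compl[OF A(1)] unfolding p_plus_def p_minus_def A_def[symmetric] A(2) .
  have mean_cycle: "expectation (tau 0) = p_plus * E_plus + p_minus * E_minus"
    using expectation_eq_cond_mean_split[OF int A(1)]
    unfolding p_plus_def p_minus_def E_plus_def E_minus_def A_def[symmetric] A(2) .
  have mean_cycle_pos: "expectation (tau 0) > 0"
    using integral_less_AE_space[of "\<lambda>_. 0" "tau 0"] int pos by (simp add: emeasure_space_1)
  have mean_win: "expectation (\<lambda>\<omega>. of_bool (S 0 \<omega>)) = p_plus"
    unfolding p_plus_def using A(1)[unfolded A_def] by (rule expectation_of_bool)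
  have gain: "1 + f * v_plus D U c > 0"
    using assms(4,6) by (simp add: v_plus_def add_pos_nonneg)
  show ?thesis using cycles.strong_law_of_large_numbers wins.strong_law_of_large_numbers AE_space
  proof eventually_elim
    case (elim \<omega>)
    show ?case
      unfolding ln_wealth_div[OF assms(8) gain assms(7)] mean_cycle[unfolded p_minus, symmetric] p_minus
      using renewal_reward_tendsto[where tau=tau, OF less_imp_le[OF pos[OF elim(3)]] elim(1) mean_cycle_pos
          average_if_tendsto[OF elim(2)[unfolded mean_win]]] .
  qed
qed

end
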